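(* Let $M$ be a free $\mathbb{T}$-module with a finite $\mathbb{T}$-basis, $V$ its associated complex vector space, and $(\cdot,\cdot)$ a bicomplex scalar product on $M$ which is hyperbolic positive and closed on $V$. Then for all $|\phi\rangle,|\psi\rangle\in M$ and $k=1,2$, $$\langle\phi_{\mathbf{e_k}}|\psi_{\mathbf{e_k}}\rangle=P_k\big(\langle\phi|\psi\rangle\big),$$ where $|\phi_{\mathbf{e_k}}\rangle=P_k(|\phi\rangle)$, $|\psi_{\mathbf{e_k}}\rangle=P_k(|\psi\rangle)$ and $\langle\alpha|\beta\rangle:=(|\alpha\rangle,|\beta\rangle)$.
   Context: Bicomplex numbers: $\mathbb{T}=\{z_1+z_2\mathbf{i_2}: z_1,z_2\in\mathbb{C}(\mathbf{i_1})\}$, $\mathbb{C}(\mathbf{i_1})=\{x+y\mathbf{i_1}: x,y\in\mathbb{R}\}$, $\mathbf{i_1}^2=\mathbf{i_2}^2=-1$, $\mathbf{i_1}\mathbf{i_2}=\mathbf{i_2}\mathbf{i_1}=\mathbf{j}$, $\mathbf{j}^2=1$ (commutative). Hyperbolic numbers $\mathbb{D}=\{x+y\mathbf{j}:x,y\in\mathbb{R}\}$. Idempotents $\mathbf{e_1}=(1+\mathbf{j})/2$, $\mathbf{e_2}=(1-\mathbf{j})/2$. Every $w=z_1+z_2\mathbf{i_2}$ is uniquely $w=(z_1-z_2\mathbf{i_1})\mathbf{e_1}+(z_1+z_2\mathbf{i_1})\mathbf{e_2}$; $P_1(w)=z_1-z_2\mathbf{i_1}$, $P_2(w)=z_1+z_2\mathbf{i_1}$.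 Conjugation: $(z_1+z_2\mathbf{i_2})^{\dagger_3}=\overline{z_1}-\overline{z_2}\mathbf{i_2}$. $\mathbb{D}^+=\{a\mathbf{e_1}+b\mathbf{e_2}: a,b\ge 0\}$. $M$ has $\mathbb{T}$-basis $\{|m_1\rangle,\dots,|m_n\rangle\}$, $V=\{\sum x_l|m_l\rangle: x_l\in\mathbb{C}(\mathbf{i_1})\}$; for $|\phi\rangle=\sum x_l|m_l\rangle$ with $x_l=x_{1l}\mathbf{e_1}+x_{2l}\mathbf{e_2}$, $x_{kl}\in\mathbb{C}(\mathbf{i_1})$, set $P_k(|\phi\rangle)=\sum_l x_{kl}|m_l\rangle\in V$. A bicomplex scalar product is a map $(\cdot,\cdot):M\times M\to\mathbb{T}$, additive in the second argument, with $(|\phi\rangle,\alpha|\psi\rangle)=\alpha(|\phi\rangle,|\psi\rangle)$ for $\alpha\in\mathbb{T}$, $(|\phi\rangle,|\psi\rangle)=(|\psi\rangle,|\phi\rangle)^{\dagger_3}$, $(|\phi\rangle,|\phi\rangle)=0\iff|\phi\rangle=0$; hyperbolic positive: $(|\phi\rangle,|\phi\rangle)\in\mathbb{D}^+$; closed on $V$: $(|\phi\rangle,|\psi\rangle)\in\mathbb{C}(\mathbf{i_1})$ for $|\phi\rangle,|\psi\rangle\in V$. *)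

theory Defs
  imports Complex_Main
begin

text \<open>Bicomplex numbers w = z1 + z2 i2, represented by the pair (z1, z2) of
  elements of C(i1); here C(i1) is the type complex, with i1 = the complex unit.\<close>
type_synonym bicomplex = "complex \<times> complex"

definition bc_add :: "bicomplex \<Rightarrow> bicomplex \<Rightarrow> bicomplex" where
  "bc_add v w = (fst v + fst w, snd v + snd w)"

definition bc_mul :: "bicomplex \<Rightarrow> bicomplex \<Rightarrow> bicomplex" where
  "bc_mul v w = (fst v * fst w - snd v * snd w, fst v * snd w + snd v * fst w)"

definition bc_zero :: bicomplex where "bc_zero = (0, 0)"

definition bc_of_complex :: "complex \<Rightarrow> bicomplex" where
  "bc_of_complex z = (z, 0)"

definition bc_conj3 :: "bicomplex \<Rightarrow> bicomplex" where
  "bc_conj3 w = (cnj (fst w), - cnj (snd w))"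

text \<open>Idempotents e1 = (1+j)/2, e2 = (1-j)/2 with j = i1 i2.\<close>
definition bc_j :: bicomplex where "bc_j = (0, \<i>)"
definition bc_e1 :: bicomplex where "bc_e1 = (1/2, \<i>/2)"
definition bc_e2 :: bicomplex where "bc_e2 = (1/2, -\<i>/2)"

definition bc_P :: "nat \<Rightarrow> bicomplex \<Rightarrow> complex" where
  "bc_P k w = (if k = 1 then fst w - snd w * \<i> else fst w + snd w * \<i>)"

definition bc_Dplus :: "bicomplex set" where
  "bc_Dplus = {w. \<exists>a b::real. a \<ge> 0 \<and> b \<ge> 0 \<and>
      w = bc_add (bc_mul (bc_of_complex (complex_of_real a)) bc_e1)
                 (bc_mul (bc_of_complex (complex_of_real b)) bc_e2)}"

text \<open>The free T-module M with finite T-basis {|m_l>}_{l :: 'n} is identified with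
  coordinate vectors 'n => T (coordinates w.r.t. that basis).\<close>
type_synonym 'n bcmod = "'n \<Rightarrow> bicomplex"

definition mod_add :: "'n bcmod \<Rightarrow> 'n bcmod \<Rightarrow> 'n bcmod" where
  "mod_add \<phi> \<psi> = (\<lambda>l. bc_add (\<phi> l) (\<psi> l))"

definition mod_smult :: "bicomplex \<Rightarrow> 'n bcmod \<Rightarrow> 'n bcmod" where
  "mod_smult \<alpha> \<psi> = (\<lambda>l. bc_mul \<alpha> (\<psi> l))"

definition mod_zero :: "'n bcmod" where
  "mod_zero = (\<lambda>l. bc_zero)"

definition mod_V :: "'n bcmod set" where
  "mod_V = {\<phi>. \<forall>l. snd (\<phi> l) = 0}"

text \<open>P_k on M: P_k(sum x_l |m_l>) = sum x_{kl} |m_l>, with x_l = x_{1l} e1 + x_{2l} e2.\<close>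
definition mod_P :: "nat \<Rightarrow> 'n bcmod \<Rightarrow> 'n bcmod" where
  "mod_P k \<phi> = (\<lambda>l. bc_of_complex (bc_P k (\<phi> l)))"

definition bicomplex_scalar_product :: "('n bcmod \<Rightarrow> 'n bcmod \<Rightarrow> bicomplex) \<Rightarrow> bool" where
  "bicomplex_scalar_product sp \<longleftrightarrow>
     (\<forall>\<phi> \<psi> \<chi>. sp \<phi> (mod_add \<psi> \<chi>) = bc_add (sp \<phi> \<psi>) (sp \<phi> \<chi>)) \<and>
     (\<forall>\<phi> \<psi> \<alpha>. sp \<phi> (mod_smult \<alpha> \<psi>) = bc_mul \<alpha> (sp \<phi> \<psi>)) \<and>
     (\<forall>\<phi> \<psi>. sp \<phi> \<psi> = bc_conj3 (sp \<psi> \<phi>)) \<and>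
     (\<forall>\<phi>. sp \<phi> \<phi> = bc_zero \<longleftrightarrow> \<phi> = mod_zero)"

definition hyperbolic_positive :: "('n bcmod \<Rightarrow> 'n bcmod \<Rightarrow> bicomplex) \<Rightarrow> bool" where
  "hyperbolic_positive sp \<longleftrightarrow> (\<forall>\<phi>. sp \<phi> \<phi> \<in> bc_Dplus)"

definition closed_on_V :: "('n bcmod \<Rightarrow> 'n bcmod \<Rightarrow> bicomplex) \<Rightarrow> bool" where
  "closed_on_V sp \<longleftrightarrow> (\<forall>\<phi> \<in> mod_V. \<forall>\<psi> \<in> mod_V. snd (sp \<phi> \<psi>) = 0)"

end

theory Submission
  imports Defs
begin

text \<open>Every bicomplex number splits as w = P1(w) e1 + P2(w) e2, where e1 e2 = 0 and
  e1, e2 are fixed by the conjugation dagger-3. Splitting both arguments of the scalar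
  product this way, sesquilinearity shows that Pk of (\<phi>, \<psi>) only sees the component
  (Pk \<phi>, Pk \<psi>); and since Pk \<phi> and Pk \<psi> lie in V, closedness on V makes that
  component a number of C(i1), which Pk leaves unchanged.\<close>

lemma bc_conj3_add: "bc_conj3 (bc_add v w) = bc_add (bc_conj3 v) (bc_conj3 w)"
  by (simp add: bc_conj3_def bc_add_def)

lemma bc_conj3_mul: "bc_conj3 (bc_mul v w) = bc_mul (bc_conj3 v) (bc_conj3 w)"
  by (simp add: bc_conj3_def bc_mul_def)

lemma bc_conj3_e1 [simp]: "bc_conj3 bc_e1 = bc_e1"
  by (simp add: bc_conj3_def bc_e1_def)

lemma bc_conj3_e2 [simp]: "bc_conj3 bc_e2 = bc_e2"
  by (simp add: bc_conj3_def bc_e2_def)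

lemma bc_P_idempotent_decomp:
  "bc_P k (bc_add (bc_mul bc_e1 v) (bc_mul bc_e2 w)) = bc_P k (if k = 1 then v else w)"
  by (simp add: bc_P_def bc_add_def bc_mul_def bc_e1_def bc_e2_def field_simps)

lemma bc_of_complex_bc_P:
  assumes "snd w = 0"
  shows "bc_of_complex (bc_P k w) = w"
  using assms by (simp add: bc_of_complex_def bc_P_def prod_eq_iff)

lemma mod_P_in_mod_V: "mod_P k \<phi> \<in> mod_V"
  by (simp add: mod_P_def mod_V_def bc_of_complex_def)

lemma mod_P_eq_mod_P2: "k \<noteq> 1 \<Longrightarrow> mod_P k = mod_P 2"
  by (simp add: mod_P_def bc_P_def fun_eq_iff)

lemma mod_P_idempotent_decomp:
  "\<phi> = mod_add (mod_smult bc_e1 (mod_P 1 \<phi>)) (mod_smult bc_e2 (mod_P 2 \<phi>))"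
proof
  fix l
  obtain a b where ab: "\<phi> l = (a, b)" by fastforce
  have "b = (\<i> * (a - b * \<i>) - \<i> * (a + b * \<i>)) / 2"
    by (simp add: field_simps)
  then show "\<phi> l = mod_add (mod_smult bc_e1 (mod_P 1 \<phi>)) (mod_smult bc_e2 (mod_P 2 \<phi>)) l"
    by (simp add: ab mod_add_def mod_smult_def mod_P_def bc_add_def bc_mul_def bc_e1_def
        bc_e2_def bc_of_complex_def bc_P_def field_simps)
qed

context
  fixes sp :: "'n bcmod \<Rightarrow> 'n bcmod \<Rightarrow> bicomplex"
  assumes sp: "bicomplex_scalar_product sp"
begin

lemma sp_add_right: "sp \<phi> (mod_add \<psi> \<chi>) = bc_add (sp \<phi> \<psi>) (sp \<phi> \<chi>)"
  and sp_smult_right: "sp \<phi> (mod_smult \<alpha> \<psi>) = bc_mul \<alpha> (sp \<phi> \<psi>)"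
  and sp_conj3_swap: "sp \<phi> \<psi> = bc_conj3 (sp \<psi> \<phi>)"
  using sp unfolding bicomplex_scalar_product_def by blast+

lemma sp_add_left: "sp (mod_add \<phi> \<chi>) \<psi> = bc_add (sp \<phi> \<psi>) (sp \<chi> \<psi>)"
  by (metis sp_conj3_swap sp_add_right bc_conj3_add)

lemma sp_smult_left: "sp (mod_smult \<alpha> \<phi>) \<psi> = bc_mul (bc_conj3 \<alpha>) (sp \<phi> \<psi>)"
  by (metis sp_conj3_swap sp_smult_right bc_conj3_mul)

lemma bc_P_sp_mod_P_left: "bc_P k (sp \<phi> \<psi>) = bc_P k (sp (mod_P k \<phi>) \<psi>)"
proof -
  have "sp \<phi> \<psi> = sp (mod_add (mod_smult bc_e1 (mod_P 1 \<phi>)) (mod_smult bc_e2 (mod_P 2 \<phi>))) \<psi>"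
    by (metis mod_P_idempotent_decomp)
  also have "\<dots> = bc_add (bc_mul bc_e1 (sp (mod_P 1 \<phi>) \<psi>)) (bc_mul bc_e2 (sp (mod_P 2 \<phi>) \<psi>))"
    by (simp add: sp_add_left sp_smult_left)
  finally have "bc_P k (sp \<phi> \<psi>) = bc_P k (if k = 1 then sp (mod_P 1 \<phi>) \<psi> else sp (mod_P 2 \<phi>) \<psi>)"
    by (simp only: bc_P_idempotent_decomp)
  then show ?thesis
    by (metis mod_P_eq_mod_P2)
qed

lemma bc_P_sp_mod_P_right: "bc_P k (sp \<phi> \<psi>) = bc_P k (sp \<phi> (mod_P k \<psi>))"
proof -
  have "sp \<phi> \<psi> = sp \<phi> (mod_add (mod_smult bc_e1 (mod_P 1 \<psi>)) (mod_smult bc_e2 (mod_P 2 \<psi>)))"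
    by (metis mod_P_idempotent_decomp)
  also have "\<dots> = bc_add (bc_mul bc_e1 (sp \<phi> (mod_P 1 \<psi>))) (bc_mul bc_e2 (sp \<phi> (mod_P 2 \<psi>)))"
    by (simp add: sp_add_right sp_smult_right)
  finally have "bc_P k (sp \<phi> \<psi>) = bc_P k (if k = 1 then sp \<phi> (mod_P 1 \<psi>) else sp \<phi> (mod_P 2 \<psi>))"
    by (simp only: bc_P_idempotent_decomp)
  then show ?thesis
    by (metis mod_P_eq_mod_P2)
qed

end

theorem mainTheorem18:
  fixes sp :: "'n::finite bcmod \<Rightarrow> 'n bcmod \<Rightarrow> bicomplex"
    and \<phi> \<psi> :: "'n bcmod" and k :: nat
  assumes "bicomplex_scalar_product sp"
    and "hyperbolic_positive sp"
    and "closed_on_V sp"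
    and "k \<in> {1, 2}"
  shows "sp (mod_P k \<phi>) (mod_P k \<psi>) = bc_of_complex (bc_P k (sp \<phi> \<psi>))"
proof -
  have "bc_P k (sp \<phi> \<psi>) = bc_P k (sp (mod_P k \<phi>) (mod_P k \<psi>))"
    by (metis assms(1) bc_P_sp_mod_P_left bc_P_sp_mod_P_right)
  moreover have "snd (sp (mod_P k \<phi>) (mod_P k \<psi>)) = 0"
    using assms(3) mod_P_in_mod_V unfolding closed_on_V_def by blast
  ultimately show ?thesis
    by (simp add: bc_of_complex_bc_P)
qed

end
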